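(* There exists a universal constant $K>0$ such that the following holds. Let $d\ge 1$, let $q$ be a probability distribution on $[d]=\{1,\dots,d\}$, let $\varepsilon>0$, and let $T\ge K\cdot\frac{\sqrt d}{\varepsilon^2}$. Then there is an algorithm which, given $c=2$ independent samples from each of (unknown) probability distributions $p_1,\dots,p_T$ on $[d]$ (all $2T$ samples mutually independent), distinguishes with probability at least $0.99$ the case $p_{\mathrm{avg}}=q$ from the case $d_{\mathrm{TV}}(p_{\mathrm{avg}},q)>\varepsilon$, where $p_{\mathrm{avg}}=\frac1T\sum_{t=1}^T p_t$.
   Context: $d_{\mathrm{TV}}$ denotes total variation distance. "Distinguishes with probability at least $0.99$" means: the algorithm (which may depend on $d,q,\varepsilon,T$ but not on the $p_t$) outputs "accept" or "reject", and it accepts with probability at least $0.99$ whenever the first case holds and rejects with probability at least $0.99$ whenever the second case holds. *)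

theory Defs
  imports Complex_Main "HOL-Library.FuncSet"
begin

text \<open>Probability distributions on [d] = {1..d}, represented by their mass functions
  (values outside [d] are irrelevant).\<close>
definition is_dist :: "nat \<Rightarrow> (nat \<Rightarrow> real) \<Rightarrow> bool" where
  "is_dist d p \<longleftrightarrow> (\<forall>i\<in>{1..d}. 0 \<le> p i) \<and> (\<Sum>i\<in>{1..d}. p i) = 1"

definition p_avg :: "nat \<Rightarrow> (nat \<Rightarrow> nat \<Rightarrow> real) \<Rightarrow> nat \<Rightarrow> real" where
  "p_avg T p i = (1 / real T) * (\<Sum>t\<in>{1..T}. p t i)"

definition d_TV :: "nat \<Rightarrow> (nat \<Rightarrow> real) \<Rightarrow> (nat \<Rightarrow> real) \<Rightarrow> real" where
  "d_TV d p q = (1/2) * (\<Sum>i\<in>{1..d}. \<bar>p i - q i\<bar>)"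

definition sample_space :: "nat \<Rightarrow> nat \<Rightarrow> (nat \<Rightarrow> nat \<times> nat) set" where
  "sample_space d T = PiE {1..T} (\<lambda>_. {1..d} \<times> {1..d})"

text \<open>Probability that the (possibly randomized) tester A accepts; A s in [0,1] is the
  probability of outputting "accept" on the sample s. All 2T samples are independent,
  the two samples with index t are drawn from p t.\<close>
definition accept_prob ::
  "nat \<Rightarrow> nat \<Rightarrow> ((nat \<Rightarrow> nat \<times> nat) \<Rightarrow> real) \<Rightarrow> (nat \<Rightarrow> nat \<Rightarrow> real) \<Rightarrow> real" where
  "accept_prob d T A p =
     (\<Sum>s\<in>sample_space d T. (\<Prod>t\<in>{1..T}. p t (fst (s t)) * p t (snd (s t))) * A s)"

end

theory Submission
  imports Defs "HOL-Analysis.Convex"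
begin

(* The two samples of round t give two independent sample sequences X and Y, each containing one
   draw from every p_t. For a symbol i let U_i be the number of rounds in which i is drawn, minus
   T q_i; its mean is mu_i = T (p_avg i - q i). By independence of X and Y the statistic
   Z = sum_i w_i U_i(X) U_i(Y), with w_i = 1 / (d q_i + 1), has mean E = sum_i w_i mu_i^2, and the
   tester accepts iff Z <= eps^2 T^2 / d. Under the null hypothesis E = 0 and E[Z^2] <= T^2 / d.
   In the far case, Cauchy-Schwarz with the weights 1 / w_i, which sum to 2 d, turns
   sum_i |mu_i| > 2 eps T into E > 2 eps^2 T^2 / d. The variance of Z is small because the
   covariance matrix of the counts, sum_t (diag p_t - p_t p_t^T), is positive semidefinite and
   dominated by the diagonal of the expected counts. Chebyshev's inequality settles both cases
   once T >= 2000 sqrt d / eps^2. *)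

section \<open>Expectations under product distributions\<close>

definition prod_expect :: "'i set \<Rightarrow> 'b set \<Rightarrow> ('i \<Rightarrow> 'b \<Rightarrow> real) \<Rightarrow> (('i \<Rightarrow> 'b) \<Rightarrow> real) \<Rightarrow> real"
  where "prod_expect I B p F = (\<Sum>X\<in>I \<rightarrow>\<^sub>E B. (\<Prod>t\<in>I. p t (X t)) * F X)"

lemma prod_expect_add:
  "prod_expect I B p (\<lambda>X. F X + G X) = prod_expect I B p F + prod_expect I B p G"
  unfolding prod_expect_def by (simp add: sum.distrib distrib_left)

lemma prod_expect_diff:
  "prod_expect I B p (\<lambda>X. F X - G X) = prod_expect I B p F - prod_expect I B p G"
  unfolding prod_expect_def by (simp add: sum_subtractf right_diff_distrib)

lemma prod_expect_cmult: "prod_expect I B p (\<lambda>X. c * F X) = c * prod_expect I B p F"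
  unfolding prod_expect_def by (simp add: sum_distrib_left mult_ac)

lemma prod_expect_sum:
  "prod_expect I B p (\<lambda>X. \<Sum>k\<in>K. F k X) = (\<Sum>k\<in>K. prod_expect I B p (F k))"
  unfolding prod_expect_def by (simp add: sum_distrib_left sum.swap[of _ K])

lemma prod_expect_prod:
  assumes "finite I" "finite B"
  shows "prod_expect I B p (\<lambda>X. \<Prod>t\<in>I. f t (X t)) = (\<Prod>t\<in>I. \<Sum>b\<in>B. p t b * f t b)"
  unfolding prod_expect_def
  using prod_sum_PiE[of I "\<lambda>_. B" "\<lambda>t b. p t b * f t b"] assms by (simp add: prod.distrib)

lemma prod_expect_pairs:
  "prod_expect I (B \<times> B) (\<lambda>t ab. p t (fst ab) * p t (snd ab))
     (\<lambda>s. G (\<lambda>t\<in>I. fst (s t)) * H (\<lambda>t\<in>I. snd (s t)))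
   = prod_expect I B p G * prod_expect I B p H"
proof -
  have "prod_expect I (B \<times> B) (\<lambda>t ab. p t (fst ab) * p t (snd ab))
          (\<lambda>s. G (\<lambda>t\<in>I. fst (s t)) * H (\<lambda>t\<in>I. snd (s t)))
      = (\<Sum>(X, Y)\<in>(I \<rightarrow>\<^sub>E B) \<times> (I \<rightarrow>\<^sub>E B). ((\<Prod>t\<in>I. p t (X t)) * G X) * ((\<Prod>t\<in>I. p t (Y t)) * H Y))"
    unfolding prod_expect_def
  proof (rule sum.reindex_bij_witness[of _ "\<lambda>(X, Y). \<lambda>t\<in>I. (X t, Y t)"
        "\<lambda>s. (\<lambda>t\<in>I. fst (s t), \<lambda>t\<in>I. snd (s t))"])
    fix s assume "s \<in> I \<rightarrow>\<^sub>E B \<times> B"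
    then show "(case (\<lambda>t\<in>I. fst (s t), \<lambda>t\<in>I. snd (s t)) of (X, Y) \<Rightarrow> \<lambda>t\<in>I. (X t, Y t)) = s"
        "(\<lambda>t\<in>I. fst (s t), \<lambda>t\<in>I. snd (s t)) \<in> (I \<rightarrow>\<^sub>E B) \<times> (I \<rightarrow>\<^sub>E B)"
      by (auto simp: PiE_def extensional_def fun_eq_iff Pi_def)
  next
    fix XY assume "XY \<in> (I \<rightarrow>\<^sub>E B) \<times> (I \<rightarrow>\<^sub>E B)"
    then show "(\<lambda>s. (\<lambda>t\<in>I. fst (s t), \<lambda>t\<in>I. snd (s t))) (case XY of (X, Y) \<Rightarrow> \<lambda>t\<in>I. (X t, Y t)) = XY"
      by (auto simp: PiE_def extensional_def fun_eq_iff)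
    show "(case XY of (X, Y) \<Rightarrow> \<lambda>t\<in>I. (X t, Y t)) \<in> I \<rightarrow>\<^sub>E B \<times> B"
      using \<open>XY \<in> _\<close> by (auto simp: PiE_def Pi_def)
  qed (simp add: prod.distrib mult_ac)
  also have "\<dots> = prod_expect I B p G * prod_expect I B p H"
    unfolding prod_expect_def by (simp add: sum_product sum.cartesian_product)
  finally show ?thesis .
qed

locale product_space =
  fixes I :: "'i set" and B :: "'b set" and p :: "'i \<Rightarrow> 'b \<Rightarrow> real"
  assumes finite_I: "finite I" and finite_B: "finite B"
    and p_nonneg: "\<And>t b. t \<in> I \<Longrightarrow> b \<in> B \<Longrightarrow> 0 \<le> p t b"
    and sum_p: "\<And>t. t \<in> I \<Longrightarrow> (\<Sum>b\<in>B. p t b) = 1"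
begin

abbreviation expect :: "(('i \<Rightarrow> 'b) \<Rightarrow> real) \<Rightarrow> real"
  where "expect \<equiv> prod_expect I B p"

lemma expect_marginal:
  assumes "J \<subseteq> I"
  shows "expect (\<lambda>X. \<Prod>t\<in>J. f t (X t)) = (\<Prod>t\<in>J. \<Sum>b\<in>B. p t b * f t b)"
proof -
  have restrict: "prod g J = (\<Prod>t\<in>I. if t \<in> J then g t else 1)" for g :: "'i \<Rightarrow> real"
    using prod.inter_restrict[OF finite_I, of g J] assms by (simp add: Int_absorb1)
  have "expect (\<lambda>X. \<Prod>t\<in>J. f t (X t)) = expect (\<lambda>X. \<Prod>t\<in>I. if t \<in> J then f t (X t) else 1)"
    by (simp only: restrict)
  also have "\<dots> = (\<Prod>t\<in>I. \<Sum>b\<in>B. p t b * (if t \<in> J then f t b else 1))"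
    by (rule prod_expect_prod[OF finite_I finite_B])
  also have "\<dots> = (\<Prod>t\<in>I. if t \<in> J then \<Sum>b\<in>B. p t b * f t b else 1)"
    by (intro prod.cong) (auto simp: sum_p)
  also have "\<dots> = (\<Prod>t\<in>J. \<Sum>b\<in>B. p t b * f t b)"
    by (simp only: restrict)
  finally show ?thesis .
qed

lemma expect_const: "expect (\<lambda>X. c) = c"
  using expect_marginal[of "{}"] prod_expect_cmult[of I B p c "\<lambda>_. 1"] by simp

lemma expect_coordinate:
  assumes "a \<in> I"
  shows "expect (\<lambda>X. f (X a)) = (\<Sum>b\<in>B. p a b * f b)"
  using expect_marginal[of "{a}" "\<lambda>_. f"] assms by simp

lemma expect_two_coordinates:
  assumes "a \<in> I" "c \<in> I" "a \<noteq> c"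
  shows "expect (\<lambda>X. f (X a) * g (X c)) = (\<Sum>b\<in>B. p a b * f b) * (\<Sum>b\<in>B. p c b * g b)"
  using expect_marginal[of "{a, c}" "\<lambda>t. if t = a then f else g"] assms by simp

lemma expect_mono:
  assumes "\<And>X. X \<in> I \<rightarrow>\<^sub>E B \<Longrightarrow> F X \<le> G X"
  shows "expect F \<le> expect G"
  unfolding prod_expect_def
  using assms by (intro sum_mono mult_left_mono prod_nonneg) (auto intro: p_nonneg)

lemma chebyshev_upper_tail:
  assumes "0 < \<tau>"
  shows "1 - expect (\<lambda>X. of_bool (Z X \<le> \<tau>)) \<le> expect (\<lambda>X. (Z X)\<^sup>2) / \<tau>\<^sup>2"
proof -
  have "1 - expect (\<lambda>X. of_bool (Z X \<le> \<tau>)) = expect (\<lambda>X. 1 - of_bool (Z X \<le> \<tau>))"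
    by (simp add: prod_expect_diff expect_const)
  also have "\<dots> \<le> expect (\<lambda>X. 1 / \<tau>\<^sup>2 * (Z X)\<^sup>2)"
  proof (rule expect_mono)
    fix X
    show "1 - of_bool (Z X \<le> \<tau>) \<le> 1 / \<tau>\<^sup>2 * (Z X)\<^sup>2"
    proof (cases "Z X \<le> \<tau>")
      case False
      then have "\<tau>\<^sup>2 \<le> (Z X)\<^sup>2" using assms by (intro power_mono) auto
      then show ?thesis using False assms by (simp add: field_simps)
    qed simp
  qed
  also have "\<dots> = expect (\<lambda>X. (Z X)\<^sup>2) / \<tau>\<^sup>2"
    using prod_expect_cmult[of I B p "1 / \<tau>\<^sup>2" "\<lambda>X. (Z X)\<^sup>2"] by simp
  finally show ?thesis .
qed

lemma chebyshev_lower_tail: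
  assumes "\<tau> < expect Z"
  shows "expect (\<lambda>X. of_bool (Z X \<le> \<tau>)) \<le> (expect (\<lambda>X. (Z X)\<^sup>2) - (expect Z)\<^sup>2) / (expect Z - \<tau>)\<^sup>2"
proof -
  define \<mu> where "\<mu> = expect Z"
  have gap: "0 < \<mu> - \<tau>" using assms by (simp add: \<mu>_def)
  have "expect (\<lambda>X. of_bool (Z X \<le> \<tau>)) \<le> expect (\<lambda>X. 1 / (\<mu> - \<tau>)\<^sup>2 * ((Z X)\<^sup>2 - 2 * \<mu> * Z X + \<mu>\<^sup>2))"
  proof (rule expect_mono)
    fix X
    have sq: "(Z X)\<^sup>2 - 2 * \<mu> * Z X + \<mu>\<^sup>2 = (\<mu> - Z X)\<^sup>2" by (simp add: power2_eq_square algebra_simps)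
    show "of_bool (Z X \<le> \<tau>) \<le> 1 / (\<mu> - \<tau>)\<^sup>2 * ((Z X)\<^sup>2 - 2 * \<mu> * Z X + \<mu>\<^sup>2)"
    proof (cases "Z X \<le> \<tau>")
      case True
      then have "(\<mu> - \<tau>)\<^sup>2 \<le> (\<mu> - Z X)\<^sup>2" using gap by (intro power_mono) auto
      then have "1 \<le> (\<mu> - Z X)\<^sup>2 / (\<mu> - \<tau>)\<^sup>2" using gap by simp
      then show ?thesis using True by (simp add: sq)
    qed (simp add: sq)
  qed
  also have "\<dots> = (expect (\<lambda>X. (Z X)\<^sup>2) - 2 * \<mu> * expect Z + \<mu>\<^sup>2) / (\<mu> - \<tau>)\<^sup>2"
    by (simp only: prod_expect_cmult prod_expect_add prod_expect_diff expect_const) simp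
  also have "\<dots> = (expect (\<lambda>X. (Z X)\<^sup>2) - \<mu>\<^sup>2) / (\<mu> - \<tau>)\<^sup>2"
    by (simp add: \<mu>_def power2_eq_square)
  finally show ?thesis unfolding \<mu>_def .
qed

lemma pair_product_space: "product_space I (B \<times> B) (\<lambda>t ab. p t (fst ab) * p t (snd ab))"
proof
  fix t assume "t \<in> I"
  then show "(\<Sum>ab\<in>B \<times> B. p t (fst ab) * p t (snd ab)) = 1"
    by (simp add: sum.cartesian_product' flip: sum_product) (simp add: sum_p)
qed (auto simp: finite_I finite_B p_nonneg)

end

section \<open>Symbol counts and their covariance\<close>

lemma square_mean_le_mean_square:
  fixes p v :: "'a \<Rightarrow> real"
  assumes "\<And>b. b \<in> B \<Longrightarrow> 0 \<le> p b" and "(\<Sum>b\<in>B. p b) = 1"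
  shows "(\<Sum>b\<in>B. p b * v b)\<^sup>2 \<le> (\<Sum>b\<in>B. p b * (v b)\<^sup>2)"
proof -
  define m where "m = (\<Sum>b\<in>B. p b * v b)"
  have "0 \<le> (\<Sum>b\<in>B. p b * (v b - m)\<^sup>2)"
    using assms(1) by (intro sum_nonneg) simp
  also have "\<dots> = (\<Sum>b\<in>B. p b * (v b)\<^sup>2) - 2 * m * (\<Sum>b\<in>B. p b * v b) + m\<^sup>2 * (\<Sum>b\<in>B. p b)"
    by (simp add: power2_eq_square algebra_simps sum.distrib sum_subtractf sum_distrib_left)
  finally show ?thesis using assms(2) by (simp add: m_def power2_eq_square)
qed

definition centered_count :: "'i set \<Rightarrow> ('b \<Rightarrow> real) \<Rightarrow> 'b \<Rightarrow> ('i \<Rightarrow> 'b) \<Rightarrow> real"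
  where "centered_count I q i X = (\<Sum>t\<in>I. of_bool (X t = i) - q i)"

definition cross_statistic ::
  "'i set \<Rightarrow> 'b set \<Rightarrow> ('b \<Rightarrow> real) \<Rightarrow> ('b \<Rightarrow> real) \<Rightarrow> ('i \<Rightarrow> 'b \<times> 'b) \<Rightarrow> real"
  where "cross_statistic I B w q s =
    (\<Sum>i\<in>B. w i * (centered_count I q i (\<lambda>t\<in>I. fst (s t)) * centered_count I q i (\<lambda>t\<in>I. snd (s t))))"

context product_space
begin

definition mass :: "'b \<Rightarrow> real"
  where "mass i = (\<Sum>t\<in>I. p t i)"

definition excess :: "('b \<Rightarrow> real) \<Rightarrow> 'b \<Rightarrow> real"
  where "excess q i = mass i - real (card I) * q i"

definition average :: "'b \<Rightarrow> real"
  where "average i = mass i / card I"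

definition cov :: "'b \<Rightarrow> 'b \<Rightarrow> real"
  where "cov i j = (\<Sum>t\<in>I. (if i = j then p t i else 0) - p t i * p t j)"

lemma mass_nonneg: "i \<in> B \<Longrightarrow> 0 \<le> mass i"
  unfolding mass_def by (intro sum_nonneg p_nonneg)

lemma sum_mass: "(\<Sum>i\<in>B. mass i) = real (card I)"
  unfolding mass_def by (subst sum.swap) (simp add: sum_p)

lemma sum_diff_eq_excess: "(\<Sum>t\<in>I. p t i - q i) = excess q i"
  unfolding excess_def mass_def by (simp add: sum_subtractf)

lemma mean_centered_indicator:
  assumes "t \<in> I" "i \<in> B"
  shows "(\<Sum>b\<in>B. p t b * (of_bool (b = i) - q i)) = p t i - q i"
  using assms finite_B by (simp add: right_diff_distrib sum_subtractf flip: sum_distrib_right) (simp add: sum_p)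

lemma mean_centered_indicator_mult:
  assumes "t \<in> I" "i \<in> B" "j \<in> B"
  shows "(\<Sum>b\<in>B. p t b * ((of_bool (b = i) - q i) * (of_bool (b = j) - q j)))
    = (p t i - q i) * (p t j - q j) + ((if i = j then p t i else 0) - p t i * p t j)"
proof -
  have diag: "of_bool (b = i) * of_bool (b = j) = of_bool (i = j) * (of_bool (b = i) :: real)" for b
    by auto
  have "(\<Sum>b\<in>B. p t b * ((of_bool (b = i) - q i) * (of_bool (b = j) - q j)))
     = of_bool (i = j) * (\<Sum>b\<in>B. of_bool (b = i) * p t b) - q j * (\<Sum>b\<in>B. of_bool (b = i) * p t b)
       - q i * (\<Sum>b\<in>B. of_bool (b = j) * p t b) + q i * q j * (\<Sum>b\<in>B. p t b)"
    by (simp add: sum.distrib sum_subtractf sum_distrib_left algebra_simps diag)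
  also have "\<dots> = (if i = j then p t i else 0) - q j * p t i - q i * p t j + q i * q j"
  proof -
    have "(\<Sum>b\<in>B. of_bool (b = k) * p t b) = p t k" if "k \<in> B" for k
      using that finite_B by (simp add: sum.If_cases)
    then show ?thesis using assms by (simp add: sum_p)
  qed
  finally show ?thesis by (simp add: algebra_simps)
qed

lemma expect_centered_count:
  assumes "i \<in> B"
  shows "expect (centered_count I q i) = excess q i"
proof -
  have "expect (\<lambda>X. of_bool (X t = i) - q i) = p t i - q i" if "t \<in> I" for t
    using expect_coordinate[OF that, of "\<lambda>b. of_bool (b = i) - q i"]
      mean_centered_indicator[OF that assms] by simp
  then show ?thesis
    unfolding centered_count_def by (simp add: prod_expect_sum sum_diff_eq_excess)
qed

lemma expect_centered_count_mult:
  assumes "i \<in> B" "j \<in> B"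
  shows "expect (\<lambda>X. centered_count I q i X * centered_count I q j X) = excess q i * excess q j + cov i j"
proof -
  have "expect (\<lambda>X. centered_count I q i X * centered_count I q j X)
      = (\<Sum>s\<in>I. \<Sum>s'\<in>I. expect (\<lambda>X. (of_bool (X s = i) - q i) * (of_bool (X s' = j) - q j)))"
    unfolding centered_count_def sum_product by (simp add: prod_expect_sum)
  also have "\<dots> = (\<Sum>s\<in>I. \<Sum>s'\<in>I. (p s i - q i) * (p s' j - q j)
      + (if s = s' then (if i = j then p s i else 0) - p s i * p s j else 0))"
  proof (intro sum.cong refl)
    fix s s' assume "s \<in> I" "s' \<in> I"
    then show "expect (\<lambda>X. (of_bool (X s = i) - q i) * (of_bool (X s' = j) - q j))
      = (p s i - q i) * (p s' j - q j) + (if s = s' then (if i = j then p s i else 0) - p s i * p s j else 0)"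
      using assms expect_coordinate[of s "\<lambda>b. (of_bool (b = i) - q i) * (of_bool (b = j) - q j)"]
        expect_two_coordinates[of s s' "\<lambda>b. of_bool (b = i) - q i" "\<lambda>b. of_bool (b = j) - q j"]
        mean_centered_indicator_mult mean_centered_indicator
      by (cases "s = s'") simp_all
  qed
  also have "\<dots> = excess q i * excess q j + cov i j"
    using finite_I
    by (simp add: sum.distrib cov_def sum_diff_eq_excess flip: sum_product)
  finally show ?thesis .
qed

lemma cov_quadratic_form:
  "(\<Sum>i\<in>B. \<Sum>j\<in>B. cov i j * v i * v j) = (\<Sum>t\<in>I. (\<Sum>i\<in>B. p t i * (v i)\<^sup>2) - (\<Sum>i\<in>B. p t i * v i)\<^sup>2)"
proof -
  have "(\<Sum>i\<in>B. \<Sum>j\<in>B. cov i j * v i * v j)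
      = (\<Sum>i\<in>B. \<Sum>j\<in>B. \<Sum>t\<in>I. (if i = j then p t i * v i * v j else 0) - (p t i * v i) * (p t j * v j))"
    unfolding cov_def sum_distrib_right by (intro sum.cong refl) (auto simp: algebra_simps)
  also have "\<dots> = (\<Sum>t\<in>I. (\<Sum>i\<in>B. \<Sum>j\<in>B. if i = j then p t i * v i * v j else 0)
                    - (\<Sum>i\<in>B. \<Sum>j\<in>B. (p t i * v i) * (p t j * v j)))"
    by (simp add: sum_subtractf[symmetric]) (subst (1 2) sum.swap, simp)
  also have "\<dots> = (\<Sum>t\<in>I. (\<Sum>i\<in>B. p t i * (v i)\<^sup>2) - (\<Sum>i\<in>B. p t i * v i)\<^sup>2)"
    using finite_B by (simp add: power2_eq_square sum_product mult_ac)
  finally show ?thesis .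
qed

lemma cov_quadratic_form_nonneg: "0 \<le> (\<Sum>i\<in>B. \<Sum>j\<in>B. cov i j * v i * v j)"
  unfolding cov_quadratic_form
  by (intro sum_nonneg) (simp add: square_mean_le_mean_square p_nonneg sum_p)

lemma cov_quadratic_form_le: "(\<Sum>i\<in>B. \<Sum>j\<in>B. cov i j * v i * v j) \<le> (\<Sum>i\<in>B. mass i * (v i)\<^sup>2)"
proof -
  have "(\<Sum>i\<in>B. \<Sum>j\<in>B. cov i j * v i * v j) \<le> (\<Sum>t\<in>I. \<Sum>i\<in>B. p t i * (v i)\<^sup>2)"
    unfolding cov_quadratic_form by (intro sum_mono) simp
  also have "\<dots> = (\<Sum>i\<in>B. mass i * (v i)\<^sup>2)"
    unfolding mass_def by (subst sum.swap) (simp add: sum_distrib_right)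
  finally show ?thesis .
qed

lemma cov_diag_le: "cov i i \<le> mass i"
  unfolding cov_def mass_def by (intro sum_mono) simp

lemma weighted_cov_square_le:
  assumes "\<And>i. i \<in> B \<Longrightarrow> 0 \<le> w i"
  shows "(\<Sum>i\<in>B. \<Sum>j\<in>B. w i * w j * (cov i j)\<^sup>2) \<le> (\<Sum>i\<in>B. (w i)\<^sup>2 * (mass i)\<^sup>2)"
proof -
  \<comment> \<open>Write \<open>cov = diag mass - \<Sum>\<^sub>t p\<^sub>t p\<^sub>t\<^sup>T\<close> in one factor of \<open>cov\<^sup>2\<close>; the second part pairs
    \<open>cov\<close> with the vectors \<open>w p\<^sub>t\<close> and is nonnegative because \<open>cov\<close> is positive semidefinite.\<close>
  have cov_split: "cov i j = (if i = j then mass i else 0) - (\<Sum>t\<in>I. p t i * p t j)" for i j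
    unfolding cov_def mass_def by (simp add: sum_subtractf sum_distrib_left)
  have "(\<Sum>i\<in>B. \<Sum>j\<in>B. w i * w j * (cov i j)\<^sup>2)
      = (\<Sum>i\<in>B. (w i)\<^sup>2 * cov i i * mass i)
        - (\<Sum>t\<in>I. \<Sum>i\<in>B. \<Sum>j\<in>B. cov i j * (w i * p t i) * (w j * p t j))"
  proof -
    have "(\<Sum>i\<in>B. \<Sum>j\<in>B. w i * w j * (cov i j)\<^sup>2)
        = (\<Sum>i\<in>B. \<Sum>j\<in>B. w i * w j * cov i j * (if i = j then mass i else 0))
          - (\<Sum>i\<in>B. \<Sum>j\<in>B. w i * w j * cov i j * (\<Sum>t\<in>I. p t i * p t j))"
      by (simp add: sum_subtractf[symmetric] power2_eq_square algebra_simps)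
         (subst (2) cov_split, simp add: algebra_simps)
    also have "(\<Sum>i\<in>B. \<Sum>j\<in>B. w i * w j * cov i j * (if i = j then mass i else 0))
        = (\<Sum>i\<in>B. (w i)\<^sup>2 * cov i i * mass i)"
      using finite_B by (simp add: power2_eq_square if_distrib cong: if_cong)
    also have "(\<Sum>i\<in>B. \<Sum>j\<in>B. w i * w j * cov i j * (\<Sum>t\<in>I. p t i * p t j))
        = (\<Sum>t\<in>I. \<Sum>i\<in>B. \<Sum>j\<in>B. cov i j * (w i * p t i) * (w j * p t j))"
      by (simp add: sum_distrib_left) (subst (1 2) sum.swap, simp add: mult_ac)
    finally show ?thesis .
  qed
  also have "\<dots> \<le> (\<Sum>i\<in>B. (w i)\<^sup>2 * cov i i * mass i)"
    using cov_quadratic_form_nonneg by (simp add: sum_nonneg)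
  also have "\<dots> \<le> (\<Sum>i\<in>B. (w i)\<^sup>2 * (mass i)\<^sup>2)"
  proof (intro sum_mono)
    fix i assume "i \<in> B"
    then have "cov i i * mass i \<le> mass i * mass i"
      using cov_diag_le mass_nonneg by (intro mult_right_mono)
    then show "(w i)\<^sup>2 * cov i i * mass i \<le> (w i)\<^sup>2 * (mass i)\<^sup>2"
      using mult_left_mono[OF _ zero_le_power2[of "w i"]] by (simp add: power2_eq_square mult.assoc)
  qed
  finally show ?thesis .
qed

abbreviation pair_expect :: "(('i \<Rightarrow> 'b \<times> 'b) \<Rightarrow> real) \<Rightarrow> real"
  where "pair_expect \<equiv> prod_expect I (B \<times> B) (\<lambda>t ab. p t (fst ab) * p t (snd ab))"

lemma expect_cross_statistic:
  "pair_expect (cross_statistic I B w q) = (\<Sum>i\<in>B. w i * (excess q i)\<^sup>2)"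
  unfolding cross_statistic_def
  by (simp add: prod_expect_sum prod_expect_cmult prod_expect_pairs expect_centered_count power2_eq_square)

lemma expect_cross_statistic_square:
  "pair_expect (\<lambda>s. (cross_statistic I B w q s)\<^sup>2)
    = (\<Sum>i\<in>B. \<Sum>j\<in>B. w i * w j * (excess q i * excess q j + cov i j)\<^sup>2)"
proof -
  let ?U = "\<lambda>i j X. centered_count I q i X * centered_count I q j X"
  have "pair_expect (\<lambda>s. (cross_statistic I B w q s)\<^sup>2)
      = pair_expect (\<lambda>s. \<Sum>i\<in>B. \<Sum>j\<in>B. w i * w j * (?U i j (\<lambda>t\<in>I. fst (s t)) * ?U i j (\<lambda>t\<in>I. snd (s t))))"
    unfolding cross_statistic_def power2_eq_square sum_product by (simp add: mult_ac)
  also have "\<dots> = (\<Sum>i\<in>B. \<Sum>j\<in>B. w i * w j * (expect (?U i j) * expect (?U i j)))"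
    using prod_expect_pairs[of I B p "?U i j" "?U i j" for i j]
    by (simp only: prod_expect_sum prod_expect_cmult)
  also have "\<dots> = (\<Sum>i\<in>B. \<Sum>j\<in>B. w i * w j * (excess q i * excess q j + cov i j)\<^sup>2)"
    by (intro sum.cong refl) (simp add: expect_centered_count_mult power2_eq_square)
  finally show ?thesis .
qed

lemma variance_cross_statistic_le:
  assumes "\<And>i. i \<in> B \<Longrightarrow> 0 \<le> w i"
  shows "pair_expect (\<lambda>s. (cross_statistic I B w q s)\<^sup>2) - (pair_expect (cross_statistic I B w q))\<^sup>2
    \<le> (\<Sum>i\<in>B. (w i)\<^sup>2 * (mass i)\<^sup>2) + 2 * (\<Sum>i\<in>B. mass i * (w i * excess q i)\<^sup>2)"
proof -
  have "(\<Sum>i\<in>B. w i * (excess q i)\<^sup>2)\<^sup>2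
      = (\<Sum>i\<in>B. \<Sum>j\<in>B. w i * w j * ((excess q i)\<^sup>2 * (excess q j)\<^sup>2))"
    by (simp add: power2_eq_square sum_product mult_ac)
  then have "pair_expect (\<lambda>s. (cross_statistic I B w q s)\<^sup>2) - (pair_expect (cross_statistic I B w q))\<^sup>2
      = (\<Sum>i\<in>B. \<Sum>j\<in>B. w i * w j * (cov i j)\<^sup>2)
        + 2 * (\<Sum>i\<in>B. \<Sum>j\<in>B. cov i j * (w i * excess q i) * (w j * excess q j))"
    unfolding expect_cross_statistic_square expect_cross_statistic
    by (simp add: sum_subtractf[symmetric] sum.distrib[symmetric] sum_distrib_left
        power2_eq_square algebra_simps)
  also have "\<dots> \<le> (\<Sum>i\<in>B. (w i)\<^sup>2 * (mass i)\<^sup>2) + 2 * (\<Sum>i\<in>B. mass i * (w i * excess q i)\<^sup>2)"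
    using weighted_cov_square_le[of w, OF assms] cov_quadratic_form_le[of "\<lambda>i. w i * excess q i"]
    by linarith
  finally show ?thesis .
qed

end

section \<open>The identity tester\<close>

definition test_weight :: "'b set \<Rightarrow> ('b \<Rightarrow> real) \<Rightarrow> 'b \<Rightarrow> real"
  where "test_weight B q i = 1 / (real (card B) * q i + 1)"

lemma square_add_le: "((x::real) + y)\<^sup>2 \<le> 2 * x\<^sup>2 + 2 * y\<^sup>2"
  using zero_le_power2[of "x - y"] by (simp add: power2_eq_square algebra_simps)

locale identity_test = product_space I B p
  for I :: "'i set" and B :: "'b set" and p :: "'i \<Rightarrow> 'b \<Rightarrow> real" +
  fixes q :: "'b \<Rightarrow> real"
  assumes q_nonneg: "\<And>i. i \<in> B \<Longrightarrow> 0 \<le> q i" and sum_q: "(\<Sum>i\<in>B. q i) = 1"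
begin

abbreviation w :: "'b \<Rightarrow> real"
  where "w \<equiv> test_weight B q"

lemma card_B_pos: "0 < card B"
  using sum_q finite_B by (cases "B = {}") (auto simp: card_gt_0_iff)

lemma weight_pos: "i \<in> B \<Longrightarrow> 0 < w i"
  unfolding test_weight_def using q_nonneg by (simp add: add_nonneg_pos)

lemma weight_nonneg: "i \<in> B \<Longrightarrow> 0 \<le> w i"
  using weight_pos by (rule less_imp_le)

lemma weight_le_1:
  assumes "i \<in> B" shows "w i \<le> 1"
proof -
  have "1 \<le> real (card B) * q i + 1" using q_nonneg[OF assms] by simp
  then show ?thesis unfolding test_weight_def by simp
qed

lemma weight_mult_q_le:
  assumes "i \<in> B" shows "w i * q i \<le> 1 / card B"
proof -
  have "real (card B) * q i \<le> real (card B) * q i + 1" by simp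
  then show ?thesis
    unfolding test_weight_def using q_nonneg[OF assms] card_B_pos
    by (simp add: divide_simps add_nonneg_pos)
qed

lemma weighted_square_le:
  assumes "i \<in> B" shows "(w i * x)\<^sup>2 \<le> w i * x\<^sup>2"
proof -
  have "w i * (w i * x\<^sup>2) \<le> 1 * (w i * x\<^sup>2)"
    using weight_le_1[OF assms] weight_pos[OF assms] by (intro mult_right_mono) auto
  then show ?thesis by (simp add: power2_eq_square mult_ac)
qed

lemma sum_weighted_q_square_le: "(\<Sum>i\<in>B. (w i * q i)\<^sup>2) \<le> 1 / card B"
proof -
  have "(\<Sum>i\<in>B. (w i * q i)\<^sup>2) \<le> (\<Sum>i\<in>B. 1 / card B * q i)"
  proof (intro sum_mono)
    fix i assume i: "i \<in> B"
    have "(w i * q i)\<^sup>2 \<le> w i * (q i)\<^sup>2" by (rule weighted_square_le[OF i])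
    also have "\<dots> = (w i * q i) * q i" by (simp add: power2_eq_square)
    also have "\<dots> \<le> 1 / card B * q i"
      using weight_mult_q_le[OF i] q_nonneg[OF i] by (rule mult_right_mono)
    finally show "(w i * q i)\<^sup>2 \<le> 1 / card B * q i" .
  qed
  also have "\<dots> = 1 / card B" by (simp only: sum_distrib_left[symmetric] sum_q)
  finally show ?thesis .
qed

lemma mass_split: "mass i = excess q i + card I * q i"
  unfolding excess_def by simp

lemma second_moment_null:
  assumes "\<And>i. i \<in> B \<Longrightarrow> mass i = card I * q i"
  shows "pair_expect (\<lambda>s. (cross_statistic I B w q s)\<^sup>2) \<le> (real (card I))\<^sup>2 / card B"
proof -
  have excess: "i \<in> B \<Longrightarrow> excess q i = 0" for i using assms by (simp add: excess_def)
  have "pair_expect (\<lambda>s. (cross_statistic I B w q s)\<^sup>2) \<le> (\<Sum>i\<in>B. (w i)\<^sup>2 * (mass i)\<^sup>2)"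
    using variance_cross_statistic_le[of w q] weight_nonneg
    by (simp add: expect_cross_statistic excess)
  also have "\<dots> = (real (card I))\<^sup>2 * (\<Sum>i\<in>B. (w i * q i)\<^sup>2)"
    using assms by (simp add: sum_distrib_left power_mult_distrib mult_ac)
  also have "\<dots> \<le> (real (card I))\<^sup>2 * (1 / card B)"
    using sum_weighted_q_square_le by (intro mult_left_mono) auto
  finally show ?thesis by simp
qed

lemma sum_abs_excess_le: "(\<Sum>i\<in>B. \<bar>excess q i\<bar>) \<le> 2 * card I"
proof -
  have "(\<Sum>i\<in>B. \<bar>excess q i\<bar>) \<le> (\<Sum>i\<in>B. mass i + card I * q i)"
    using mass_nonneg q_nonneg by (intro sum_mono) (auto simp: excess_def abs_le_iff)
  also have "\<dots> = 2 * card I"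
    using sum_q by (simp add: sum.distrib sum_mass flip: sum_distrib_left)
  finally show ?thesis .
qed

lemma sum_abs_excess_square_le:
  "(\<Sum>i\<in>B. \<bar>excess q i\<bar>)\<^sup>2 \<le> 2 * card B * (\<Sum>i\<in>B. w i * (excess q i)\<^sup>2)"
proof -
  define c where "c i = card B * q i + 1" for i
  have c_pos: "i \<in> B \<Longrightarrow> 0 < c i" for i
    using q_nonneg by (simp add: c_def add_nonneg_pos)
  have "(\<Sum>i\<in>B. \<bar>excess q i\<bar>)\<^sup>2 = (\<Sum>i\<in>B. sqrt (c i) * (\<bar>excess q i\<bar> / sqrt (c i)))\<^sup>2"
    using c_pos by (intro arg_cong[where f = "\<lambda>x. x\<^sup>2"] sum.cong) (auto simp: less_imp_neq[symmetric])
  also have "\<dots> \<le> (\<Sum>i\<in>B. (sqrt (c i))\<^sup>2) * (\<Sum>i\<in>B. (\<bar>excess q i\<bar> / sqrt (c i))\<^sup>2)"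
    by (rule Cauchy_Schwarz_ineq_sum)
  also have "\<dots> = (\<Sum>i\<in>B. card B * q i + 1) * (\<Sum>i\<in>B. w i * (excess q i)\<^sup>2)"
    using c_pos by (intro arg_cong2[where f = "(*)"] sum.cong)
      (auto simp: less_imp_le power_divide test_weight_def c_def)
  also have "(\<Sum>i\<in>B. card B * q i + 1) = 2 * card B"
    using sum_q by (simp add: sum.distrib flip: sum_distrib_left)
  finally show ?thesis .
qed

lemma variance_far_le:
  defines "E \<equiv> \<Sum>i\<in>B. w i * (excess q i)\<^sup>2"
  shows "pair_expect (\<lambda>s. (cross_statistic I B w q s)\<^sup>2) - E\<^sup>2
    \<le> 2 * E + 2 * ((real (card I))\<^sup>2 / card B) + 2 * E * sqrt E + 2 * (card I / card B) * E"
proof -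
  have E_ge: "i \<in> B \<Longrightarrow> (w i * excess q i)\<^sup>2 \<le> E" for i
  proof -
    assume i: "i \<in> B"
    have "w i * (excess q i)\<^sup>2 \<le> E"
      unfolding E_def using i finite_B by (intro member_le_sum) (auto intro: mult_nonneg_nonneg weight_nonneg)
    then show ?thesis using weighted_square_le[OF i, of "excess q i"] by linarith
  qed
  have diag: "(\<Sum>i\<in>B. (w i)\<^sup>2 * (mass i)\<^sup>2) \<le> 2 * E + 2 * ((real (card I))\<^sup>2 / card B)"
  proof -
    have "(\<Sum>i\<in>B. (w i)\<^sup>2 * (mass i)\<^sup>2)
        \<le> (\<Sum>i\<in>B. 2 * (w i * (excess q i)\<^sup>2) + 2 * (real (card I))\<^sup>2 * (w i * q i)\<^sup>2)"
    proof (intro sum_mono)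
      fix i assume i: "i \<in> B"
      have "(w i)\<^sup>2 * (mass i)\<^sup>2 = (w i * excess q i + card I * (w i * q i))\<^sup>2"
        by (simp add: mass_split power2_eq_square algebra_simps)
      also have "\<dots> \<le> 2 * (w i * excess q i)\<^sup>2 + 2 * (card I * (w i * q i))\<^sup>2"
        by (rule square_add_le)
      also have "\<dots> \<le> 2 * (w i * (excess q i)\<^sup>2) + 2 * (real (card I))\<^sup>2 * (w i * q i)\<^sup>2"
        using weighted_square_le[OF i] by (simp add: power_mult_distrib)
      finally show "(w i)\<^sup>2 * (mass i)\<^sup>2 \<le> 2 * (w i * (excess q i)\<^sup>2) + 2 * (real (card I))\<^sup>2 * (w i * q i)\<^sup>2" .
    qed
    also have "\<dots> = 2 * E + 2 * (real (card I))\<^sup>2 * (\<Sum>i\<in>B. (w i * q i)\<^sup>2)"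
      by (simp add: E_def sum.distrib sum_distrib_left)
    also have "\<dots> \<le> 2 * E + 2 * (real (card I))\<^sup>2 * (1 / card B)"
      using sum_weighted_q_square_le by (intro add_left_mono mult_left_mono) auto
    finally show ?thesis by simp
  qed
  have cross: "(\<Sum>i\<in>B. mass i * (w i * excess q i)\<^sup>2) \<le> E * sqrt E + (card I / card B) * E"
  proof -
    have "(\<Sum>i\<in>B. mass i * (w i * excess q i)\<^sup>2)
        \<le> (\<Sum>i\<in>B. (sqrt E + card I / card B) * (w i * (excess q i)\<^sup>2))"
    proof (intro sum_mono)
      fix i assume i: "i \<in> B"
      have "\<bar>w i * excess q i\<bar> \<le> sqrt E"
        using real_sqrt_le_mono[OF E_ge[OF i]] by simp
      then have "(w i * excess q i) * (w i * (excess q i)\<^sup>2) \<le> sqrt E * (w i * (excess q i)\<^sup>2)"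
        using weight_pos[OF i] by (intro mult_right_mono) auto
      moreover have "card I * (w i * q i) * (w i * (excess q i)\<^sup>2) \<le> card I * (1 / card B) * (w i * (excess q i)\<^sup>2)"
        using weight_mult_q_le[OF i] weight_pos[OF i] by (intro mult_right_mono mult_left_mono) auto
      moreover have "mass i * (w i * excess q i)\<^sup>2
          = (w i * excess q i) * (w i * (excess q i)\<^sup>2) + card I * (w i * q i) * (w i * (excess q i)\<^sup>2)"
        by (simp add: mass_split power2_eq_square algebra_simps)
      ultimately show "mass i * (w i * excess q i)\<^sup>2 \<le> (sqrt E + card I / card B) * (w i * (excess q i)\<^sup>2)"
        by (simp add: algebra_simps)
    qed
    also have "\<dots> = E * sqrt E + (card I / card B) * E"
      by (simp only: sum_distrib_left[symmetric] flip: E_def) (simp add: algebra_simps)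
    finally show ?thesis .
  qed
  have "pair_expect (\<lambda>s. (cross_statistic I B w q s)\<^sup>2) - E\<^sup>2
      \<le> (\<Sum>i\<in>B. (w i)\<^sup>2 * (mass i)\<^sup>2) + 2 * (\<Sum>i\<in>B. mass i * (w i * excess q i)\<^sup>2)"
    using variance_cross_statistic_le[of w q] weight_nonneg by (simp add: expect_cross_statistic flip: E_def)
  then show ?thesis using diag cross by linarith
qed

end

lemma far_tail_numeric_bound:
  fixes n N \<epsilon> E V :: real
  assumes n: "1 \<le> n" and \<epsilon>: "0 < \<epsilon>" "\<epsilon> \<le> 1" and N: "2000 * sqrt n \<le> N * \<epsilon>\<^sup>2"
    and E: "2 * (\<epsilon>\<^sup>2 * N\<^sup>2 / n) < E"
    and V: "V \<le> 2 * E + 2 * (N\<^sup>2 / n) + 2 * E * sqrt E + 2 * (N / n) * E"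
  shows "V / (E - \<epsilon>\<^sup>2 * N\<^sup>2 / n)\<^sup>2 \<le> 0.01"
proof -
  define a where "a = N * \<epsilon>\<^sup>2"
  have \<epsilon>2: "0 < \<epsilon>\<^sup>2" "\<epsilon>\<^sup>2 \<le> 1" using \<epsilon> by (auto simp: power_le_one)
  have "1 \<le> sqrt n" using n by simp
  then have a: "2000 \<le> a" using N unfolding a_def by linarith
  have N_pos: "0 < N"
  proof (rule ccontr)
    assume "\<not> 0 < N"
    then have "a \<le> 0" using \<epsilon>2 by (simp add: a_def mult_nonpos_nonneg)
    then show False using a by simp
  qed
  have "(2000 * sqrt n)\<^sup>2 \<le> a\<^sup>2" using N n by (intro power_mono) (auto simp: a_def)
  then have a2: "2000\<^sup>2 * n \<le> a\<^sup>2" using n by (simp add: power_mult_distrib)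
  have "2 * (a\<^sup>2 / n) < \<epsilon>\<^sup>2 * E"
    using mult_strict_left_mono[OF E \<epsilon>2(1)] by (simp add: a_def power2_eq_square field_simps)
  moreover have "2000\<^sup>2 \<le> a\<^sup>2 / n" using a2 n by (simp add: field_simps)
  ultimately have \<epsilon>E: "2 * 2000\<^sup>2 \<le> \<epsilon>\<^sup>2 * E" by linarith
  have "0 \<le> 2 * (\<epsilon>\<^sup>2 * N\<^sup>2 / n)" using n by simp
  then have E_pos: "0 < E" using E by linarith
  have "\<epsilon>\<^sup>2 * E \<le> E" using \<epsilon>2 E_pos by (intro mult_left_le_one_le) auto
  then have E_big: "2 * 2000\<^sup>2 \<le> E" using \<epsilon>E by linarith
  define R where "R = 2 * E + 2 * (N\<^sup>2 / n) + 2 * E * sqrt E + 2 * (N / n) * E"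
  have R_nonneg: "0 \<le> R" using E_pos N_pos n by (simp add: R_def)
  have gap: "E / 2 \<le> E - \<epsilon>\<^sup>2 * N\<^sup>2 / n" using E by linarith
  have "V / (E - \<epsilon>\<^sup>2 * N\<^sup>2 / n)\<^sup>2 \<le> R / (E - \<epsilon>\<^sup>2 * N\<^sup>2 / n)\<^sup>2"
    using V by (simp add: R_def divide_right_mono)
  also have "\<dots> \<le> R / (E / 2)\<^sup>2"
  proof (rule divide_left_mono[OF _ R_nonneg])
    show "(E / 2)\<^sup>2 \<le> (E - \<epsilon>\<^sup>2 * N\<^sup>2 / n)\<^sup>2" using gap E_pos by (intro power_mono) auto
    have "0 < E - \<epsilon>\<^sup>2 * N\<^sup>2 / n" using gap E_pos by linarith
    then show "0 < (E - \<epsilon>\<^sup>2 * N\<^sup>2 / n)\<^sup>2 * (E / 2)\<^sup>2" using E_pos by simp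
  qed
  also have "\<dots> = 8 / E + 8 * ((N\<^sup>2 / n) / E\<^sup>2) + 8 / sqrt E + 8 * ((N / n) / E)"
  proof -
    have "sqrt E * sqrt E = E" using E_pos by simp
    then show ?thesis using E_pos by (simp add: R_def field_simps power2_eq_square)
  qed
  also have "\<dots> \<le> 8 / (2 * 2000\<^sup>2) + 8 * (1 / (4 * 2000\<^sup>2)) + 8 / 2000 + 8 * (1 / 4000)"
  proof -
    have "8 / E \<le> 8 / (2 * 2000\<^sup>2)" using E_big by (intro divide_left_mono) auto
    moreover have "(N\<^sup>2 / n) / E\<^sup>2 \<le> 1 / (4 * 2000\<^sup>2)"
    proof -
      have "N\<^sup>2 / n \<le> E / (2 * \<epsilon>\<^sup>2)" using E \<epsilon>2 by (simp add: field_simps)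
      then have "(N\<^sup>2 / n) / E\<^sup>2 \<le> (E / (2 * \<epsilon>\<^sup>2)) / E\<^sup>2" by (rule divide_right_mono) simp
      also have "\<dots> = 1 / (2 * (\<epsilon>\<^sup>2 * E))" using E_pos \<epsilon>2 by (simp add: field_simps power2_eq_square)
      also have "\<dots> \<le> 1 / (4 * 2000\<^sup>2)" using \<epsilon>E by (simp add: field_simps)
      finally show ?thesis .
    qed
    moreover have "8 / sqrt E \<le> 8 / 2000"
    proof -
      have "sqrt (2000\<^sup>2) \<le> sqrt E" using E_big by (intro real_sqrt_le_mono) simp
      then show ?thesis using E_pos by (intro divide_left_mono) auto
    qed
    moreover have "(N / n) / E \<le> 1 / 4000"
    proof -
      have "2 * (\<epsilon>\<^sup>2 * N\<^sup>2) \<le> n * E" using E n by (simp add: field_simps)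
      then have "(N / n) / E \<le> 1 / (2 * a)"
        using E_pos N_pos n \<epsilon>2 by (simp add: a_def field_simps power2_eq_square)
      also have "\<dots> \<le> 1 / 4000" using a by (simp add: field_simps)
      finally show ?thesis .
    qed
    ultimately show ?thesis by linarith
  qed
  also have "\<dots> \<le> 0.01" by simp
  finally show ?thesis .
qed

definition identity_tester :: "'i set \<Rightarrow> 'b set \<Rightarrow> ('b \<Rightarrow> real) \<Rightarrow> real \<Rightarrow> ('i \<Rightarrow> 'b \<times> 'b) \<Rightarrow> real"
  where "identity_tester I B q \<epsilon> s =
    of_bool (cross_statistic I B (test_weight B q) q s \<le> \<epsilon>\<^sup>2 * (real (card I))\<^sup>2 / card B)"

context identity_test
begin

lemma identity_tester_accepts:
  fixes \<epsilon> :: real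
  assumes "\<And>i. i \<in> B \<Longrightarrow> average i = q i" and "0 < \<epsilon>"
    and "2000 * sqrt (card B) \<le> card I * \<epsilon>\<^sup>2"
  shows "0.99 \<le> pair_expect (identity_tester I B q \<epsilon>)"
proof -
  define \<tau> where "\<tau> = \<epsilon>\<^sup>2 * (real (card I))\<^sup>2 / card B"
  have "1 \<le> sqrt (card B)" using card_B_pos by simp
  then have a: "2000 \<le> card I * \<epsilon>\<^sup>2" using assms(3) by linarith
  then have "0 < card I" by (cases "card I = 0") auto
  then have \<tau>_pos: "0 < \<tau>" using assms(2) card_B_pos by (simp add: \<tau>_def)
  have "mass i = card I * q i" if "i \<in> B" for i
    using assms(1)[OF that] \<open>0 < card I\<close> by (simp add: average_def field_simps)
  note second_moment = second_moment_null[OF this]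
  have "(2000 * sqrt (card B))\<^sup>2 \<le> (card I * \<epsilon>\<^sup>2)\<^sup>2"
    using assms(3) by (intro power_mono) auto
  then have a2: "2000\<^sup>2 * card B \<le> (card I * \<epsilon>\<^sup>2)\<^sup>2" by (simp add: power_mult_distrib)
  have "1 - pair_expect (identity_tester I B q \<epsilon>) \<le> pair_expect (\<lambda>s. (cross_statistic I B w q s)\<^sup>2) / \<tau>\<^sup>2"
    using product_space.chebyshev_upper_tail[OF pair_product_space \<tau>_pos]
    unfolding identity_tester_def \<tau>_def by simp
  also have "\<dots> \<le> ((real (card I))\<^sup>2 / card B) / \<tau>\<^sup>2"
    using second_moment by (intro divide_right_mono) auto
  also have "\<dots> = card B / (card I * \<epsilon>\<^sup>2)\<^sup>2"
    using \<tau>_pos card_B_pos \<open>0 < card I\<close> assms(2) by (simp add: \<tau>_def field_simps power2_eq_square)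
  also have "\<dots> \<le> card B / (2000\<^sup>2 * card B)"
  proof -
    have "0 < card I * \<epsilon>\<^sup>2" using a by linarith
    then show ?thesis using a2 card_B_pos \<open>0 < card I\<close> assms(2)
      by (intro divide_left_mono mult_pos_pos) auto
  qed
  also have "\<dots> \<le> 0.01" using card_B_pos by simp
  finally show ?thesis by simp
qed

lemma identity_tester_rejects:
  fixes \<epsilon> :: real
  assumes "\<epsilon> < 1 / 2 * (\<Sum>i\<in>B. \<bar>average i - q i\<bar>)" and "0 < \<epsilon>"
    and "2000 * sqrt (card B) \<le> card I * \<epsilon>\<^sup>2"
  shows "pair_expect (identity_tester I B q \<epsilon>) \<le> 0.01"
proof -
  define E where "E = (\<Sum>i\<in>B. w i * (excess q i)\<^sup>2)"
  define \<tau> where "\<tau> = \<epsilon>\<^sup>2 * (real (card I))\<^sup>2 / card B"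
  have "1 \<le> sqrt (card B)" using card_B_pos by simp
  then have "2000 \<le> card I * \<epsilon>\<^sup>2" using assms(3) by linarith
  then have "0 < card I" by (cases "card I = 0") auto
  have "average i - q i = excess q i / card I" for i
    using \<open>0 < card I\<close> by (simp add: average_def excess_def field_simps)
  then have "(\<Sum>i\<in>B. \<bar>average i - q i\<bar>) = (\<Sum>i\<in>B. \<bar>excess q i\<bar>) / card I"
    by (simp add: abs_divide sum_divide_distrib)
  moreover have "2 * \<epsilon> * card I < (\<Sum>i\<in>B. \<bar>average i - q i\<bar>) * card I"
    using assms(1) \<open>0 < card I\<close> by (intro mult_strict_right_mono) auto
  ultimately have far: "2 * \<epsilon> * card I < (\<Sum>i\<in>B. \<bar>excess q i\<bar>)"
    using \<open>0 < card I\<close> by simp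
  have "\<epsilon> * (2 * card I) < 1 * (2 * card I)"
    using far sum_abs_excess_le by (simp add: mult_ac)
  then have \<epsilon>_le: "\<epsilon> \<le> 1" using \<open>0 < card I\<close> by simp
  have "(2 * \<epsilon> * card I)\<^sup>2 < (\<Sum>i\<in>B. \<bar>excess q i\<bar>)\<^sup>2"
    using far assms(2) by (intro power_strict_mono) auto
  then have "4 * (\<epsilon>\<^sup>2 * (real (card I))\<^sup>2) < 2 * card B * E"
    using sum_abs_excess_square_le by (simp add: E_def power_mult_distrib)
  then have E_gt: "2 * \<tau> < E" using card_B_pos by (simp add: \<tau>_def field_simps)
  moreover have "0 \<le> \<tau>" by (simp add: \<tau>_def)
  ultimately have "\<tau> < E" by linarith
  have "pair_expect (identity_tester I B q \<epsilon>)
      \<le> (pair_expect (\<lambda>s. (cross_statistic I B w q s)\<^sup>2) - E\<^sup>2) / (E - \<tau>)\<^sup>2"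
    using product_space.chebyshev_lower_tail[OF pair_product_space, of \<tau> "cross_statistic I B w q"]
      \<open>\<tau> < E\<close>
    unfolding identity_tester_def \<tau>_def expect_cross_statistic E_def by simp
  also have "\<dots> \<le> 0.01"
    using far_tail_numeric_bound[OF _ assms(2) \<epsilon>_le assms(3) _ variance_far_le] E_gt card_B_pos
    by (simp add: E_def \<tau>_def)
  finally show ?thesis .
qed

end

lemma accept_prob_eq_prod_expect:
  "accept_prob d T A p = prod_expect {1..T} ({1..d} \<times> {1..d}) (\<lambda>t ab. p t (fst ab) * p t (snd ab)) A"
  by (simp add: accept_prob_def sample_space_def prod_expect_def)

theorem theorem2p1:
  shows "\<exists>K::real. K > 0 \<and>
    (\<forall>(d::nat) (q::nat \<Rightarrow> real) (\<epsilon>::real) (T::nat).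
       d \<ge> 1 \<longrightarrow> is_dist d q \<longrightarrow> \<epsilon> > 0 \<longrightarrow> real T \<ge> K * sqrt (real d) / \<epsilon>^2 \<longrightarrow>
       (\<exists>A :: (nat \<Rightarrow> nat \<times> nat) \<Rightarrow> real.
          (\<forall>s. 0 \<le> A s \<and> A s \<le> 1) \<and>
          (\<forall>p :: nat \<Rightarrow> nat \<Rightarrow> real. (\<forall>t\<in>{1..T}. is_dist d (p t)) \<longrightarrow>
             ((\<forall>i\<in>{1..d}. p_avg T p i = q i) \<longrightarrow> accept_prob d T A p \<ge> 0.99) \<and>
             (d_TV d (p_avg T p) q > \<epsilon> \<longrightarrow> 1 - accept_prob d T A p \<ge> 0.99))))"
proof (intro exI[of _ "2000::real"] conjI allI impI
    exI[of _ "identity_tester {1..T} {1..d} q \<epsilon>" for T d q \<epsilon>])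
  fix d T :: nat and q :: "nat \<Rightarrow> real" and \<epsilon> :: real and p :: "nat \<Rightarrow> nat \<Rightarrow> real"
  assume "1 \<le> d" "is_dist d q" "0 < \<epsilon>" "2000 * sqrt d / \<epsilon>\<^sup>2 \<le> real T"
    and "\<forall>t\<in>{1..T}. is_dist d (p t)"
  then interpret identity_test "{1..T}" "{1..d}" p q
    by unfold_locales (auto simp: is_dist_def)
  have T: "2000 * sqrt (card {1..d}) \<le> card {1..T} * \<epsilon>\<^sup>2"
    using \<open>0 < \<epsilon>\<close> \<open>2000 * sqrt d / \<epsilon>\<^sup>2 \<le> T\<close> by (simp add: field_simps)
  have avg: "p_avg T p = average"
    unfolding p_avg_def average_def mass_def by (simp add: fun_eq_iff)
  show "0.99 \<le> accept_prob d T (identity_tester {1..T} {1..d} q \<epsilon>) p"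
    if "\<forall>i\<in>{1..d}. p_avg T p i = q i"
    using identity_tester_accepts[OF _ \<open>0 < \<epsilon>\<close> T] that avg by (simp add: accept_prob_eq_prod_expect)
  show "0.99 \<le> 1 - accept_prob d T (identity_tester {1..T} {1..d} q \<epsilon>) p"
    if "\<epsilon> < d_TV d (p_avg T p) q"
    using identity_tester_rejects[OF _ \<open>0 < \<epsilon>\<close> T] that avg
    by (simp add: accept_prob_eq_prod_expect d_TV_def)
qed (auto simp: identity_tester_def)

end
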